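(* Let $a,b\in\alpha$ and let $w_{a,b}$ be the nanoword $(\{A,B\},ABAB)$ with $|A|=a$, $|B|=b$. The group of homotopy automorphisms of $w_{a,b}$ is the full group of $\tau$-equivariant bijections $\alpha\to\alpha$ if $a=\tau(b)$, and is the subgroup of $\tau$-equivariant bijections $f$ with $f(a)=a$ and $f(b)=b$ if $a\neq\tau(b)$.
   Context: Fix a set $\alpha$ with an involution $\tau$. An $\alpha$-alphabet is a set $\mathcal A$ with a map $p:\mathcal A\to\alpha$, $A\mapsto|A|$. A nanoword over $\alpha$ is a pair $(\mathcal A,w)$ with $\mathcal A$ a finite $\alpha$-alphabet and $w$ a word in which each letter occurs exactly twice. Isomorphism: bijection of alphabets preserving $|\cdot|$ carrying one word to the other letterwise. Homotopy moves ($x,y,z,t$ words in the remaining letters): (1) $(\mathcal A,xAAy)\mapsto(\mathcal A\setminus\{A\},xy)$; (2) $(\mathcal A,xAByBAz)\mapsto(\mathcal A\setminus\{A,B\},xyz)$ if $|B|=\tau(|A|)$; (3) $(\mathcal A,xAByACzBCt)\mapsto(\mathcal A,xBAyCAzCBt)$ if $A,B,C$ distinct with $|A|=|B|=|C|$. Homotopy ($\simeq$) is generated by isomorphisms, these moves and inverses. For a bijection $f:\alpha\to\alpha$ and a nanoword $(\mathcal A,p,w)$, let $f_\#(w)=(\mathcal A,f\circ p,w)$. A homotopy automorphism of $w$ is a $\tau$-equivariant bijection $f:\alpha\to\alpha$ (i.e. $f\tau=\tau f$) such that $f_\#(w)\simeq w$; these form a group under composition. *)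

theory Defs
  imports Main
begin

text \<open>Nanowords over alpha = UNIV :: 'a set. Letters are drawn from nat (an infinite
supply); the alphabet of a nanoword (w, p) is set w, and p gives the projection |.|
(only its values on set w matter).\<close>

type_synonym 'a nanoword = "nat list \<times> (nat \<Rightarrow> 'a)"

definition is_nanoword :: "'a nanoword \<Rightarrow> bool" where
  "is_nanoword u \<longleftrightarrow> (\<forall>x\<in>set (fst u). count_list (fst u) x = 2)"

definition nw_iso :: "'a nanoword \<Rightarrow> 'a nanoword \<Rightarrow> bool" where
  "nw_iso u v \<longleftrightarrow> (\<exists>g. inj_on g (set (fst u)) \<and> map g (fst u) = fst v \<and>
      (\<forall>x\<in>set (fst u). snd v (g x) = snd u x))"

definition move1 :: "'a nanoword \<Rightarrow> 'a nanoword \<Rightarrow> bool" where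
  "move1 u v \<longleftrightarrow> snd v = snd u \<and>
     (\<exists>x y A. fst u = x @ [A, A] @ y \<and> fst v = x @ y)"

definition move2 :: "('a \<Rightarrow> 'a) \<Rightarrow> 'a nanoword \<Rightarrow> 'a nanoword \<Rightarrow> bool" where
  "move2 \<tau> u v \<longleftrightarrow> snd v = snd u \<and>
     (\<exists>x y z A B. A \<noteq> B \<and> snd u B = \<tau> (snd u A) \<and>
        fst u = x @ [A, B] @ y @ [B, A] @ z \<and> fst v = x @ y @ z)"

definition move3 :: "'a nanoword \<Rightarrow> 'a nanoword \<Rightarrow> bool" where
  "move3 u v \<longleftrightarrow> snd v = snd u \<and>
     (\<exists>x y z t A B C. A \<noteq> B \<and> A \<noteq> C \<and> B \<noteq> C \<and>
        snd u A = snd u B \<and> snd u B = snd u C \<and>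
        fst u = x @ [A, B] @ y @ [A, C] @ z @ [B, C] @ t \<and>
        fst v = x @ [B, A] @ y @ [C, A] @ z @ [C, B] @ t)"

definition nw_step :: "('a \<Rightarrow> 'a) \<Rightarrow> 'a nanoword \<Rightarrow> 'a nanoword \<Rightarrow> bool" where
  "nw_step \<tau> u v \<longleftrightarrow> is_nanoword u \<and> is_nanoword v \<and>
     (nw_iso u v \<or> move1 u v \<or> move2 \<tau> u v \<or> move3 u v)"

definition homotopic :: "('a \<Rightarrow> 'a) \<Rightarrow> 'a nanoword \<Rightarrow> 'a nanoword \<Rightarrow> bool" where
  "homotopic \<tau> = (\<lambda>u v. nw_step \<tau> u v \<or> nw_step \<tau> v u)\<^sup>*\<^sup>*"

definition push_nw :: "('a \<Rightarrow> 'a) \<Rightarrow> 'a nanoword \<Rightarrow> 'a nanoword" where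
  "push_nw f u = (fst u, f \<circ> snd u)"

definition tau_equivariant_bij :: "('a \<Rightarrow> 'a) \<Rightarrow> ('a \<Rightarrow> 'a) \<Rightarrow> bool" where
  "tau_equivariant_bij \<tau> f \<longleftrightarrow> bij f \<and> f \<circ> \<tau> = \<tau> \<circ> f"

definition homotopy_automorphisms :: "('a \<Rightarrow> 'a) \<Rightarrow> 'a nanoword \<Rightarrow> ('a \<Rightarrow> 'a) set" where
  "homotopy_automorphisms \<tau> u =
     {f. tau_equivariant_bij \<tau> f \<and> homotopic \<tau> (push_nw f u) u}"

definition w_ab :: "'a \<Rightarrow> 'a \<Rightarrow> 'a nanoword" where
  "w_ab a b = ([0, 1, 0, 1], (\<lambda>x. if x = 0 then a else b))"

end

theory Submission
  imports Defs
begin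

(*
  If a = \<tau> b, every w_{c, \<tau> c} contracts to the empty nanoword (two inverse second moves
  and an inverse third move turn it into a word that cancels by second and first moves), and an
  equivariant f sends w_{a, \<tau> a} to w_{f a, \<tau> (f a)}; so every equivariant bijection is a
  homotopy automorphism.

  If a \<noteq> \<tau> b, invariants must separate w_{a,b} from every other w_{c,d}. For a letter X let
  L_X count, by type, the letters interlaced with X with sign, and K_X only the positively
  interlaced ones. For a predicate Q on (L_X, K_X) that is blind to the changes the three moves
  cause, the number of letters of type t satisfying Q (mod 2 if \<tau> t = t, minus the number for
  \<tau> t otherwise) is a homotopy invariant. Comparing the class of L_X modulo the vectors
  \<delta>_x + \<delta>_(\<tau> x) with \<delta>_b and \<delta>_(\<tau> a), and the parity of K_X at a \<tau>-fixed b, shows that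
  w_{c,d} \<simeq> w_{a,b} forces (c, d) = (a, b).
*)

definition interlace_sign :: "nat list \<Rightarrow> nat \<Rightarrow> nat \<Rightarrow> int" where
  "interlace_sign l X Y = (if X \<noteq> Y \<and> l = [X, Y, X, Y] then 1
      else if X \<noteq> Y \<and> l = [Y, X, Y, X] then -1 else 0)"

definition linking :: "nat list \<Rightarrow> nat \<Rightarrow> nat \<Rightarrow> int" where
  "linking w X Y = interlace_sign (filter (\<lambda>z. z = X \<or> z = Y) w) X Y"

lemma interlace_sign_map:
  assumes "inj_on g (set l \<union> {X, Y})"
  shows "interlace_sign (map g l) (g X) (g Y) = interlace_sign l X Y"
proof -
  have "inj_on g (set l \<union> set [X, Y, X, Y])" "inj_on g (set l \<union> set [Y, X, Y, X])"
    using assms by (simp_all add: insert_commute)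
  then have "(map g l = map g [X, Y, X, Y]) = (l = [X, Y, X, Y])"
       "(map g l = map g [Y, X, Y, X]) = (l = [Y, X, Y, X])"
    by (simp_all only: inj_on_map_eq_map)
  moreover have "(g X = g Y) = (X = Y)"
    by (simp add: inj_on_eq_iff[OF assms])
  ultimately show ?thesis
    unfolding interlace_sign_def by simp
qed

lemma linking_map:
  assumes "inj_on g (set w \<union> {X, Y})"
  shows "linking (map g w) (g X) (g Y) = linking w X Y"
proof -
  let ?f = "filter (\<lambda>z. z = X \<or> z = Y) w"
  have "filter (\<lambda>z. z = g X \<or> z = g Y) (map g w) = map g ?f"
    unfolding filter_map
    by (intro arg_cong[where f = "map g"] filter_cong) (auto simp: inj_on_eq_iff[OF assms])
  moreover have "inj_on g (set ?f \<union> {X, Y})"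
    using assms by (rule inj_on_subset) auto
  ultimately show ?thesis
    unfolding linking_def by (simp add: interlace_sign_map)
qed

lemma linking_self [simp]: "linking w X X = 0"
  unfolding linking_def interlace_sign_def by simp

lemma interlace_sign_adjacent: "interlace_sign (l1 @ A # A # l2) X Y = 0"
proof -
  have "l1 @ A # A # l2 \<noteq> [X, Y, X, Y]" "l1 @ A # A # l2 \<noteq> [Y, X, Y, X]" if "X \<noteq> Y"
    using that by (cases l1; cases "tl l1"; cases "tl (tl l1)"; auto)+
  then show ?thesis
    unfolding interlace_sign_def by auto
qed

lemma linking_adjacent:
  "linking (x @ [A, A] @ y) X A = 0" "linking (x @ [A, A] @ y) A Y = 0"
  unfolding linking_def by (simp_all add: interlace_sign_adjacent)

lemma filter_two_notin: "X \<notin> set l \<Longrightarrow> Y \<notin> set l \<Longrightarrow> filter (\<lambda>z. z = X \<or> z = Y) l = []"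
  by (auto simp: filter_empty_conv)

lemma nanoword_notin_between:
  assumes "is_nanoword (x @ A # y @ A # z, p)"
  shows "A \<notin> set x" "A \<notin> set y" "A \<notin> set z"
proof -
  have "count_list (x @ A # y @ A # z) A = 2"
    using assms unfolding is_nanoword_def by simp
  then show "A \<notin> set x" "A \<notin> set y" "A \<notin> set z"
    by (simp_all add: count_list_0_iff[symmetric])
qed

definition delta :: "'a \<Rightarrow> 'a \<Rightarrow> int" where
  "delta x y = (if x = y then 1 else 0)"

definition indicator_one :: "int \<Rightarrow> int" where
  "indicator_one v = (if v = 1 then 1 else 0)"

text \<open>With \<open>h = id\<close> this is the linking vector \<open>L\<^sub>X\<close> of the letter \<open>X\<close>, with
  \<open>h = indicator_one\<close> the vector \<open>K\<^sub>X\<close> of positively interlaced letters.\<close>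

definition link_sum :: "(int \<Rightarrow> int) \<Rightarrow> nat list \<Rightarrow> (nat \<Rightarrow> 'a) \<Rightarrow> nat \<Rightarrow> 'a \<Rightarrow> int" where
  "link_sum h w p X y = (\<Sum>Y\<in>set w. if p Y = y then h (linking w X Y) else 0)"

definition letter_count ::
    "(('a \<Rightarrow> int) \<Rightarrow> ('a \<Rightarrow> int) \<Rightarrow> bool) \<Rightarrow> 'a nanoword \<Rightarrow> 'a \<Rightarrow> int" where
  "letter_count Q u t = (\<Sum>X\<in>set (fst u).
      if snd u X = t \<and> Q (link_sum id (fst u) (snd u) X) (link_sum indicator_one (fst u) (snd u) X)
      then 1 else 0)"

definition letter_invariant ::
    "('a \<Rightarrow> 'a) \<Rightarrow> (('a \<Rightarrow> int) \<Rightarrow> ('a \<Rightarrow> int) \<Rightarrow> bool) \<Rightarrow> 'a \<Rightarrow> 'a nanoword \<Rightarrow> int" where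
  "letter_invariant \<tau> Q t u = (if \<tau> t = t then letter_count Q u t mod 2
      else letter_count Q u t - letter_count Q u (\<tau> t))"

text \<open>The three conditions are what moves (1), (2), (3) respectively require: the letter
  removed by move (1) has zero vectors; move (2) changes the vectors of the remaining letters
  by multiples of \<open>\<delta>\<^sub>\<alpha> + \<delta>\<^sub>\<tau>\<^sub>\<alpha>\<close>; move (3) changes the positive vector of a letter only
  at the letter's own type, which is \<open>t\<close> or \<open>\<tau> t\<close> for the letters counted.\<close>

definition admissible :: "('a \<Rightarrow> 'a) \<Rightarrow> 'a \<Rightarrow> (('a \<Rightarrow> int) \<Rightarrow> ('a \<Rightarrow> int) \<Rightarrow> bool) \<Rightarrow> bool" where
  "admissible \<tau> t Q \<longleftrightarrow> \<not> Q (\<lambda>_. 0) (\<lambda>_. 0) \<and>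
     (\<forall>L K \<alpha> k j. Q (\<lambda>y. L y + k * (delta \<alpha> y + delta (\<tau> \<alpha>) y))
                     (\<lambda>y. K y + j * (delta \<alpha> y + delta (\<tau> \<alpha>) y)) = Q L K) \<and>
     (\<forall>L K K'. (\<forall>y. y \<noteq> t \<and> y \<noteq> \<tau> t \<longrightarrow> K y = K' y) \<longrightarrow> Q L K = Q L K')"

lemma letter_count_nonneg: "letter_count Q u t \<ge> 0"
  unfolding letter_count_def by (rule sum_nonneg) simp

lemma link_sum_map:
  assumes inj: "inj_on g (set w)" and X: "X \<in> set w" and q: "\<forall>x\<in>set w. q (g x) = p x"
  shows "link_sum h (map g w) q (g X) = link_sum h w p X"
proof
  fix s
  have link: "linking (map g w) (g X) (g Y) = linking w X Y" if "Y \<in> set w" for Y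
    using linking_map[of g w X Y] inj X that by (simp add: insert_absorb)
  show "link_sum h (map g w) q (g X) s = link_sum h w p X s"
    unfolding link_sum_def using inj q by (simp add: sum.reindex, intro sum.cong) (simp_all add: link)
qed

lemma letter_count_iso:
  assumes "nw_iso u v"
  shows "letter_count Q v t = letter_count Q u t"
proof -
  obtain g where inj: "inj_on g (set (fst u))" and v: "fst v = map g (fst u)"
    and q: "\<forall>x\<in>set (fst u). snd v (g x) = snd u x"
    using assms unfolding nw_iso_def by metis
  show ?thesis
    unfolding letter_count_def v using inj q link_sum_map[OF inj _ q] by (simp add: sum.reindex)
qed

lemma letter_count_move1:
  assumes nw: "is_nanoword (x @ [A, A] @ y, p)" and Q0: "\<not> Q (\<lambda>_. 0) (\<lambda>_. 0)"
  shows "letter_count Q (x @ [A, A] @ y, p) t = letter_count Q (x @ y, p) t"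
proof -
  define u where "u = x @ [A, A] @ y"
  define v where "v = x @ y"
  have set_u: "set u = insert A (set v)" and A_v: "A \<notin> set v"
    using nanoword_notin_between[of x A "[]" y p] nw u_def v_def by auto
  have link_v: "linking u X Y = linking v X Y" if "X \<noteq> A" "Y \<noteq> A" for X Y
    unfolding linking_def u_def v_def using that by simp
  have sum_A: "link_sum h u p A = (\<lambda>_. 0)" if "h 0 = 0" for h
    unfolding link_sum_def u_def using linking_adjacent that by (intro ext sum.neutral) auto
  have sum_v: "link_sum h u p X = link_sum h v p X" if "h 0 = 0" "X \<in> set v" for h X
  proof
    fix s
    have X_A: "X \<noteq> A" using that A_v by auto
    have "linking u X Y = linking v X Y" if Y: "Y \<in> set v" for Y
      by (rule link_v[OF X_A]) (use A_v Y in blast)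
    moreover have "linking u X A = 0"
      unfolding u_def by (rule linking_adjacent)
    ultimately show "link_sum h u p X s = link_sum h v p X s"
      unfolding link_sum_def set_u using A_v \<open>h 0 = 0\<close>
      by (simp add: sum.insert, intro sum.cong) simp_all
  qed
  have "letter_count Q (u, p) t = (\<Sum>X\<in>set v.
      if p X = t \<and> Q (link_sum id u p X) (link_sum indicator_one u p X) then 1 else 0)"
    unfolding letter_count_def using set_u A_v sum_A[of id] sum_A[of indicator_one] Q0
    by (simp add: indicator_one_def)
  also have "\<dots> = letter_count Q (v, p) t"
    unfolding letter_count_def using sum_v[of id] sum_v[of indicator_one]
    by (intro sum.cong) (auto simp: indicator_one_def)
  finally show ?thesis using u_def v_def by simp
qed

lemma linking_move2:
  fixes x y z :: "nat list" and A B :: nat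
  defines "u \<equiv> x @ [A, B] @ y @ [B, A] @ z"
  assumes notin: "A \<notin> set (x @ y @ z)" "B \<notin> set (x @ y @ z)" and AB: "A \<noteq> B"
  shows "\<lbrakk>X \<notin> {A, B}; Y \<notin> {A, B}\<rbrakk> \<Longrightarrow> linking u X Y = linking (x @ y @ z) X Y"
    and "X \<notin> {A, B} \<Longrightarrow> linking u X A = linking u X B"
    and "linking u A Y = linking u B Y"
proof -
  define g where "g = (\<lambda>z. if z = A then B else if z = B then A else z)"
  have "map g x = x" "map g y = y" "map g z = z"
    using notin unfolding g_def by (auto intro!: map_idI)
  then have map_u: "map g u = x @ [B, A] @ y @ [A, B] @ z"
    unfolding u_def by (simp add: g_def)
  have "inj g"
    unfolding g_def inj_def by auto
  then have swap: "linking (x @ [B, A] @ y @ [A, B] @ z) (g X) (g Y) = linking u X Y" for X Y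
    using linking_map[OF inj_on_subset[OF _ subset_UNIV], of g u X Y] map_u by simp
  show "linking u X Y = linking (x @ y @ z) X Y" if "X \<notin> {A, B}" "Y \<notin> {A, B}"
    using that unfolding linking_def u_def by simp
  show "linking u X A = linking u X B" if "X \<notin> {A, B}"
  proof -
    have "linking (x @ [B, A] @ y @ [A, B] @ z) X B = linking u X B"
      unfolding linking_def u_def using that AB by simp
    then show ?thesis
      using swap[of X A] that by (simp add: g_def)
  qed
  show "linking u A Y = linking u B Y"
  proof (cases "Y \<in> {A, B}")
    case True
    have "filter (\<lambda>z. z = A \<or> z = B) u = [A, B, B, A]" "filter (\<lambda>z. z = B \<or> z = A) u = [A, B, B, A]"
      unfolding u_def using notin AB by (simp_all add: filter_two_notin)
    then show ?thesis
      using True AB unfolding linking_def interlace_sign_def by auto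
  next
    case False
    have "linking (x @ [B, A] @ y @ [A, B] @ z) B Y = linking u B Y"
      unfolding linking_def u_def using False AB by simp
    then show ?thesis
      using swap[of A Y] False by (simp add: g_def)
  qed
qed

lemma link_sum_move2:
  fixes x y z :: "nat list" and A B :: nat
  defines "u \<equiv> x @ [A, B] @ y @ [B, A] @ z"
  assumes notin: "A \<notin> set (x @ y @ z)" "B \<notin> set (x @ y @ z)" and AB: "A \<noteq> B"
  shows "link_sum h u p B = link_sum h u p A"
    and "\<lbrakk>h 0 = 0; X \<in> set (x @ y @ z)\<rbrakk> \<Longrightarrow> link_sum h u p X
           = (\<lambda>s. link_sum h (x @ y @ z) p X s + h (linking u X A) * (delta (p A) s + delta (p B) s))"
proof -
  note link = linking_move2[OF notin AB, folded u_def]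
  show "link_sum h u p B = link_sum h u p A"
    unfolding link_sum_def by (intro ext sum.cong refl) (simp add: link(3))
  show "link_sum h u p X
      = (\<lambda>s. link_sum h (x @ y @ z) p X s + h (linking u X A) * (delta (p A) s + delta (p B) s))"
    if "h 0 = 0" "X \<in> set (x @ y @ z)"
  proof
    fix s
    have X_AB: "X \<notin> {A, B}"
      using that notin by auto
    have "set u = insert A (insert B (set (x @ y @ z)))"
      unfolding u_def by auto
    moreover have "linking u X Y = linking (x @ y @ z) X Y" if Y: "Y \<in> set (x @ y @ z)" for Y
      by (rule link(1)[OF X_AB]) (use notin Y in blast)
    ultimately have "link_sum h u p X s = (if p A = s then h (linking u X A) else 0)
        + (if p B = s then h (linking u X B) else 0) + link_sum h (x @ y @ z) p X s"
      unfolding link_sum_def using notin AB by (simp add: sum.insert, intro sum.cong) auto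
    then show "link_sum h u p X s
        = link_sum h (x @ y @ z) p X s + h (linking u X A) * (delta (p A) s + delta (p B) s)"
      using link(2)[OF X_AB] by (simp add: delta_def algebra_simps)
  qed
qed

lemma letter_count_move2:
  assumes nw: "is_nanoword (x @ [A, B] @ y @ [B, A] @ z, p)" and AB: "A \<noteq> B"
    and pB: "p B = \<tau> (p A)"
    and shift: "\<forall>L K \<alpha> k j. Q (\<lambda>y. L y + k * (delta \<alpha> y + delta (\<tau> \<alpha>) y))
                               (\<lambda>y. K y + j * (delta \<alpha> y + delta (\<tau> \<alpha>) y)) = Q L K"
  obtains c where "\<And>t. letter_count Q (x @ [A, B] @ y @ [B, A] @ z, p) t
      = letter_count Q (x @ y @ z, p) t + (if c \<and> p A = t then 1 else 0)
        + (if c \<and> \<tau> (p A) = t then 1 else 0)"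
proof -
  define u where "u = x @ [A, B] @ y @ [B, A] @ z"
  define v where "v = x @ y @ z"
  have notin: "A \<notin> set v" "B \<notin> set v"
    using nanoword_notin_between[of x A "B # y @ [B]" z p]
      nanoword_notin_between[of "x @ [A]" B y "A # z" p] nw AB
    unfolding v_def by auto
  note sums = link_sum_move2[OF notin[unfolded v_def] AB, folded u_def v_def]
  have Q_v: "Q (link_sum id u p X) (link_sum indicator_one u p X)
      = Q (link_sum id v p X) (link_sum indicator_one v p X)" if "X \<in> set v" for X
    using sums(2)[where h = id and p = p] sums(2)[where h = indicator_one and p = p] that shift pB
    by (simp add: indicator_one_def)
  define c where "c = Q (link_sum id u p A) (link_sum indicator_one u p A)"
  have "letter_count Q (u, p) t = letter_count Q (v, p) t + (if c \<and> p A = t then 1 else 0)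
      + (if c \<and> \<tau> (p A) = t then 1 else 0)" for t
  proof -
    have "set u = insert A (insert B (set v))"
      unfolding u_def v_def by auto
    then have "letter_count Q (u, p) t = (if p A = t \<and> c then 1 else 0) + (if p B = t \<and> c then 1 else 0)
        + (\<Sum>X\<in>set v. if p X = t \<and> Q (link_sum id u p X) (link_sum indicator_one u p X) then 1 else 0)"
      unfolding letter_count_def c_def using notin AB
      by (simp add: sum.insert sums(1)[where h = id] sums(1)[where h = indicator_one])
    also have "(\<Sum>X\<in>set v. if p X = t \<and> Q (link_sum id u p X) (link_sum indicator_one u p X)
        then 1 else 0) = letter_count Q (v, p) t"
      unfolding letter_count_def using Q_v by (intro sum.cong) auto
    finally show ?thesis using pB by auto
  qed
  then show ?thesis
    using that unfolding u_def v_def by blast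
qed

lemma sum_eq_if_eq_off_two:
  assumes "finite T" "B \<in> T" "C \<in> T" "B \<noteq> C"
    and "\<And>E. E \<in> T \<Longrightarrow> E \<noteq> B \<Longrightarrow> E \<noteq> C \<Longrightarrow> f E = g E"
    and "f B + f C = (g B + g C :: 'b :: comm_monoid_add)"
  shows "sum f T = sum g T"
proof -
  have C: "C \<in> T - {B}" using assms by auto
  have "sum h T = h B + (h C + sum h (T - {B} - {C}))" for h :: "_ \<Rightarrow> 'b"
    using sum.remove[OF assms(1,2), of h] sum.remove[OF _ C, of h] assms(1) by simp
  moreover have "sum f (T - {B} - {C}) = sum g (T - {B} - {C})"
    using assms(5) by (intro sum.cong) auto
  ultimately show ?thesis
    using assms(6) by (metis add.assoc)
qed

lemma linking_move3:
  fixes x y z r :: "nat list" and A B C :: nat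
  defines "u \<equiv> x @ [A, B] @ y @ [A, C] @ z @ [B, C] @ r"
    and "v \<equiv> x @ [B, A] @ y @ [C, A] @ z @ [C, B] @ r"
  assumes notin: "{A, B, C} \<inter> set (x @ y @ z @ r) = {}"
    and distinct: "A \<noteq> B" "A \<noteq> C" "B \<noteq> C"
  shows "D \<notin> {A, B, C} \<or> E \<notin> {A, B, C} - {D} \<Longrightarrow> linking u D E = linking v D E"
    and "linking u A B = 1" "linking v A B = 0" "linking u A C = 0" "linking v A C = 1"
      "linking u B A = -1" "linking v B A = 0" "linking u B C = 1" "linking v B C = 0"
      "linking u C A = 0" "linking v C A = -1" "linking u C B = -1" "linking v C B = 0"
proof -
  show "linking u D E = linking v D E" if "D \<notin> {A, B, C} \<or> E \<notin> {A, B, C} - {D}"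
  proof (cases "D = E")
    case False
    then show ?thesis
      using that distinct unfolding linking_def u_def v_def by auto
  qed simp
  have "filter (\<lambda>z. z = A \<or> z = B) u = [A, B, A, B]" "filter (\<lambda>z. z = A \<or> z = B) v = [B, A, A, B]"
    "filter (\<lambda>z. z = B \<or> z = A) u = [A, B, A, B]" "filter (\<lambda>z. z = B \<or> z = A) v = [B, A, A, B]"
    "filter (\<lambda>z. z = A \<or> z = C) u = [A, A, C, C]" "filter (\<lambda>z. z = A \<or> z = C) v = [A, C, A, C]"
    "filter (\<lambda>z. z = C \<or> z = A) u = [A, A, C, C]" "filter (\<lambda>z. z = C \<or> z = A) v = [A, C, A, C]"
    "filter (\<lambda>z. z = B \<or> z = C) u = [B, C, B, C]" "filter (\<lambda>z. z = B \<or> z = C) v = [B, C, C, B]"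
    "filter (\<lambda>z. z = C \<or> z = B) u = [B, C, B, C]" "filter (\<lambda>z. z = C \<or> z = B) v = [B, C, C, B]"
    unfolding u_def v_def using notin distinct by (simp_all add: filter_two_notin)
  then show "linking u A B = 1" "linking v A B = 0" "linking u A C = 0" "linking v A C = 1"
      "linking u B A = -1" "linking v B A = 0" "linking u B C = 1" "linking v B C = 0"
      "linking u C A = 0" "linking v C A = -1" "linking u C B = -1" "linking v C B = 0"
    unfolding linking_def interlace_sign_def using distinct by auto
qed

lemma link_sum_move3:
  fixes x y z r :: "nat list" and A B C :: nat
  defines "u \<equiv> x @ [A, B] @ y @ [A, C] @ z @ [B, C] @ r"
    and "v \<equiv> x @ [B, A] @ y @ [C, A] @ z @ [C, B] @ r"
  assumes notin: "{A, B, C} \<inter> set (x @ y @ z @ r) = {}"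
    and distinct: "A \<noteq> B" "A \<noteq> C" "B \<noteq> C" and types: "p A = p B" "p B = p C"
    and h: "h 0 = 0" "s \<noteq> p X \<or> h (-1) + h 1 = 0"
  shows "link_sum h u p X s = link_sum h v p X s"
proof -
  note link = linking_move3[OF notin distinct, folded u_def v_def]
  have set_u: "set u = set v" and ABC: "A \<in> set v" "B \<in> set v" "C \<in> set v"
    unfolding u_def v_def by auto
  consider "X \<notin> {A, B, C}" | "X = A" | "X = B" | "X = C" by blast
  then show ?thesis
  proof cases
    case 1
    then show ?thesis
      unfolding link_sum_def set_u using link(1) by (intro sum.cong) auto
  next
    case 2
    have "linking u A E = linking v A E" if "E \<noteq> B" "E \<noteq> C" for E
      using link(1)[of A E] that by blast
    then show ?thesis unfolding link_sum_def set_u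
      by (intro sum_eq_if_eq_off_two[of _ B C]) (use ABC distinct 2 link(2-13) types h in auto)
  next
    case 3
    have "linking u B E = linking v B E" if "E \<noteq> A" "E \<noteq> C" for E
      using link(1)[of B E] that by blast
    then show ?thesis unfolding link_sum_def set_u
      by (intro sum_eq_if_eq_off_two[of _ A C]) (use ABC distinct 3 link(2-13) types h in auto)
  next
    case 4
    have "linking u C E = linking v C E" if "E \<noteq> A" "E \<noteq> B" for E
      using link(1)[of C E] that by blast
    then show ?thesis unfolding link_sum_def set_u
      by (intro sum_eq_if_eq_off_two[of _ A B]) (use ABC distinct 4 link(2-13) types h in auto)
  qed
qed

lemma letter_count_move3:
  assumes nw: "is_nanoword (x @ [A, B] @ y @ [A, C] @ z @ [B, C] @ r, p)"
    and distinct: "A \<noteq> B" "A \<noteq> C" "B \<noteq> C" and types: "p A = p B" "p B = p C"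
    and ignores: "\<forall>L K K'. (\<forall>y. y \<noteq> t \<and> y \<noteq> t' \<longrightarrow> K y = K' y) \<longrightarrow> Q L K = Q L K'"
    and s: "s = t \<or> s = t'"
  shows "letter_count Q (x @ [A, B] @ y @ [A, C] @ z @ [B, C] @ r, p) s
       = letter_count Q (x @ [B, A] @ y @ [C, A] @ z @ [C, B] @ r, p) s"
proof -
  define u where "u = x @ [A, B] @ y @ [A, C] @ z @ [B, C] @ r"
  define v where "v = x @ [B, A] @ y @ [C, A] @ z @ [C, B] @ r"
  have "{A, B, C} \<inter> set (x @ y @ z @ r) = {}"
    using nanoword_notin_between[of x A "B # y" "C # z @ B # C # r" p]
      nanoword_notin_between[of "x @ [A]" B "y @ [A, C] @ z" "C # r" p]
      nanoword_notin_between[of "x @ [A, B] @ y @ [A]" C "z @ [B]" r p] nw distinct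
    by auto
  note sums = link_sum_move3[OF this distinct types, folded u_def v_def]
  have "Q (link_sum id u p X) (link_sum indicator_one u p X)
      = Q (link_sum id v p X) (link_sum indicator_one v p X)" if "p X = s" for X
  proof -
    have "link_sum id u p X = link_sum id v p X"
      using sums[of id] by (intro ext) auto
    moreover have "\<forall>y. y \<noteq> t \<and> y \<noteq> t' \<longrightarrow> link_sum indicator_one u p X y = link_sum indicator_one v p X y"
      using sums[of indicator_one] that s by (auto simp: indicator_one_def)
    ultimately show ?thesis
      using ignores by metis
  qed
  moreover have "set u = set v"
    unfolding u_def v_def by auto
  ultimately show ?thesis
    unfolding u_def[symmetric] v_def[symmetric] letter_count_def fst_conv snd_conv
    by (intro sum.cong) auto
qed

lemma letter_invariant_eqI:
  assumes "letter_count Q u t = letter_count Q v t"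
    and "letter_count Q u (\<tau> t) = letter_count Q v (\<tau> t)"
  shows "letter_invariant \<tau> Q t u = letter_invariant \<tau> Q t v"
  unfolding letter_invariant_def using assms by simp

text \<open>The letters removed by move (2) contribute the same amount to the counts at \<open>p A\<close> and at
  \<open>\<tau> (p A)\<close>: this cancels in the difference, and is even at a fixed point of \<open>\<tau>\<close>.\<close>

lemma letter_invariant_move2:
  assumes inv: "\<And>x. \<tau> (\<tau> x) = x"
    and nw: "is_nanoword (x @ [A, B] @ y @ [B, A] @ z, p)" and AB: "A \<noteq> B" "p B = \<tau> (p A)"
    and shift: "\<forall>L K \<alpha> k j. Q (\<lambda>y. L y + k * (delta \<alpha> y + delta (\<tau> \<alpha>) y))
                               (\<lambda>y. K y + j * (delta \<alpha> y + delta (\<tau> \<alpha>) y)) = Q L K"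
  shows "letter_invariant \<tau> Q t (x @ [A, B] @ y @ [B, A] @ z, p) = letter_invariant \<tau> Q t (x @ y @ z, p)"
proof -
  obtain c where "\<And>s. letter_count Q (x @ [A, B] @ y @ [B, A] @ z, p) s
      = letter_count Q (x @ y @ z, p) s + (if c \<and> p A = s then 1 else 0)
        + (if c \<and> \<tau> (p A) = s then 1 else 0)"
    using letter_count_move2[OF nw AB shift] by blast
  moreover have "(\<tau> (p A) = t) = (p A = \<tau> t)" "(\<tau> (p A) = \<tau> t) = (p A = t)"
    using inv by metis+
  ultimately show ?thesis
    unfolding letter_invariant_def by auto
qed

lemma letter_invariant_step:
  assumes inv: "\<And>x. \<tau> (\<tau> x) = x" and adm: "admissible \<tau> t Q" and step: "nw_step \<tau> u v"
  shows "letter_invariant \<tau> Q t u = letter_invariant \<tau> Q t v"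
proof -
  obtain w p where u: "u = (w, p)" by fastforce
  have nw: "is_nanoword (w, p)"
    using step u unfolding nw_step_def by simp
  have Q0: "\<not> Q (\<lambda>_. 0) (\<lambda>_. 0)"
    and shift: "\<forall>L K \<alpha> k j. Q (\<lambda>y. L y + k * (delta \<alpha> y + delta (\<tau> \<alpha>) y))
                              (\<lambda>y. K y + j * (delta \<alpha> y + delta (\<tau> \<alpha>) y)) = Q L K"
    and ignores: "\<forall>L K K'. (\<forall>y. y \<noteq> t \<and> y \<noteq> \<tau> t \<longrightarrow> K y = K' y) \<longrightarrow> Q L K = Q L K'"
    using adm unfolding admissible_def by blast+
  consider "nw_iso u v" | "move1 u v" | "move2 \<tau> u v" | "move3 u v"
    using step unfolding nw_step_def by blast
  then show ?thesis
  proof cases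
    case 1
    then show ?thesis
      by (intro letter_invariant_eqI) (simp_all add: letter_count_iso)
  next
    case 2
    then obtain x y A where "w = x @ [A, A] @ y" "v = (x @ y, p)"
      using u unfolding move1_def by (metis prod.collapse prod.inject)
    then show ?thesis
      using letter_count_move1[where Q = Q, OF _ Q0] nw u by (intro letter_invariant_eqI) simp_all
  next
    case 3
    then obtain x y z A B where "A \<noteq> B" "p B = \<tau> (p A)"
      and "w = x @ [A, B] @ y @ [B, A] @ z" and "v = (x @ y @ z, p)"
      using u unfolding move2_def by (metis prod.collapse prod.inject)
    then show ?thesis
      using letter_invariant_move2[OF inv _ _ _ shift] nw u by simp
  next
    case 4
    then obtain x y z r A B C where ABC: "A \<noteq> B" "A \<noteq> C" "B \<noteq> C" "p A = p B" "p B = p C"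
      and "w = x @ [A, B] @ y @ [A, C] @ z @ [B, C] @ r"
      and "v = (x @ [B, A] @ y @ [C, A] @ z @ [C, B] @ r, p)"
      using u unfolding move3_def by (metis prod.collapse prod.inject)
    then show ?thesis
      using letter_count_move3[OF _ ABC ignores] nw u by (intro letter_invariant_eqI) simp_all
  qed
qed

lemma letter_invariant_homotopic:
  assumes "\<And>x. \<tau> (\<tau> x) = x" and "admissible \<tau> t Q" and "homotopic \<tau> u v"
  shows "letter_invariant \<tau> Q t u = letter_invariant \<tau> Q t v"
  using assms(3) unfolding homotopic_def
  by (induction rule: rtranclp_induct) (auto simp: letter_invariant_step[OF assms(1,2)])

text \<open>Equality of the classes of \<open>L\<close> and \<open>M\<close> in \<open>\<int>\<^sup>\<alpha>\<close> modulo the vectors \<open>\<delta>\<^sub>x + \<delta>\<^sub>\<tau>\<^sub>x\<close>: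
  on a free orbit \<open>{x, \<tau> x}\<close> the class is read off as \<open>L x - L (\<tau> x)\<close>, on a fixed point as
  the parity of \<open>L x\<close>.\<close>

definition tau_congruent :: "('a \<Rightarrow> 'a) \<Rightarrow> ('a \<Rightarrow> int) \<Rightarrow> ('a \<Rightarrow> int) \<Rightarrow> bool" where
  "tau_congruent \<tau> L M \<longleftrightarrow> (\<forall>x. (\<tau> x \<noteq> x \<longrightarrow> L x - L (\<tau> x) = M x - M (\<tau> x)) \<and>
                                (\<tau> x = x \<longrightarrow> even (L x - M x)))"

lemma tau_congruent_shift:
  assumes inv: "\<And>x. \<tau> (\<tau> x) = x"
  shows "tau_congruent \<tau> (\<lambda>y. L y + k * (delta \<alpha> y + delta (\<tau> \<alpha>) y)) M = tau_congruent \<tau> L M"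
proof -
  have swap: "delta \<alpha> (\<tau> x) = delta (\<tau> \<alpha>) x" "delta (\<tau> \<alpha>) (\<tau> x) = delta \<alpha> x" for x
    unfolding delta_def using inv by metis+
  have "(L x + k * (delta \<alpha> x + delta (\<tau> \<alpha>) x))
      - (L (\<tau> x) + k * (delta \<alpha> (\<tau> x) + delta (\<tau> \<alpha>) (\<tau> x))) = L x - L (\<tau> x)" for x
    by (simp add: swap algebra_simps)
  moreover have "even (L x + k * (delta \<alpha> x + delta (\<tau> \<alpha>) x) - M x) = even (L x - M x)"
    if "\<tau> x = x" for x
  proof -
    have "delta (\<tau> \<alpha>) x = delta \<alpha> x"
      using swap(1)[of x] that by simp
    then have eq: "L x + k * (delta \<alpha> x + delta (\<tau> \<alpha>) x) - M x = (L x - M x) + 2 * (k * delta \<alpha> x)"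
      by (simp add: algebra_simps)
    show ?thesis
      unfolding eq by simp
  qed
  ultimately show ?thesis
    unfolding tau_congruent_def by metis
qed

lemma tau_congruent_delta_iff: "tau_congruent \<tau> (delta x) (delta z) \<longleftrightarrow> x = z"
proof
  assume cong: "tau_congruent \<tau> (delta x) (delta z)"
  show "x = z"
  proof (cases "\<tau> x = x")
    case True
    then have "even (delta x x - delta z x)"
      using cong unfolding tau_congruent_def by blast
    then show ?thesis by (simp add: delta_def split: if_splits)
  next
    case False
    then have "delta x x - delta x (\<tau> x) = delta z x - delta z (\<tau> x)"
      using cong unfolding tau_congruent_def by blast
    then show ?thesis
      using False by (simp add: delta_def split: if_splits)
  qed
qed (simp add: tau_congruent_def)

lemma tau_congruent_neg_delta_iff:
  assumes inv: "\<And>x. \<tau> (\<tau> x) = x"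
  shows "tau_congruent \<tau> (\<lambda>y. - delta x y) (delta z) \<longleftrightarrow> z = \<tau> x"
proof
  assume cong: "tau_congruent \<tau> (\<lambda>y. - delta x y) (delta z)"
  show "z = \<tau> x"
  proof (cases "\<tau> x = x")
    case True
    then have "even (- delta x x - delta z x)"
      using cong unfolding tau_congruent_def by blast
    then show ?thesis
      using True by (simp add: delta_def split: if_splits)
  next
    case False
    then have "\<tau> (\<tau> x) \<noteq> \<tau> x"
      using inv by metis
    then have "- delta x (\<tau> x) - - delta x (\<tau> (\<tau> x)) = delta z (\<tau> x) - delta z (\<tau> (\<tau> x))"
      using cong unfolding tau_congruent_def by blast
    then show ?thesis
      using False inv by (simp add: delta_def split: if_splits)
  qed
next
  assume "z = \<tau> x"
  then show "tau_congruent \<tau> (\<lambda>y. - delta x y) (delta z)"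
    unfolding tau_congruent_def delta_def using inv by (auto, metis+)
qed

lemma not_tau_congruent_zero_delta: "\<not> tau_congruent \<tau> (\<lambda>_. 0) (delta z)"
proof
  assume cong: "tau_congruent \<tau> (\<lambda>_. 0) (delta z)"
  show False
  proof (cases "\<tau> z = z")
    case True
    then have "even (0 - delta z z)"
      using cong unfolding tau_congruent_def by blast
    then show False by (simp add: delta_def)
  next
    case False
    then have "0 - 0 = delta z z - delta z (\<tau> z)"
      using cong unfolding tau_congruent_def by blast
    then show False
      using False by (simp add: delta_def)
  qed
qed

lemma admissible_tau_congruent:
  assumes "\<And>x. \<tau> (\<tau> x) = x"
  shows "admissible \<tau> t (\<lambda>L K. tau_congruent \<tau> L (delta m))"
  unfolding admissible_def using not_tau_congruent_zero_delta tau_congruent_shift[OF assms] by simp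

lemma admissible_odd_at_fixed_point:
  assumes inv: "\<And>x. \<tau> (\<tau> x) = x" and fixed: "\<tau> b = b" and "t \<noteq> b"
  shows "admissible \<tau> t (\<lambda>L K. odd (K b))"
proof -
  have "\<tau> t \<noteq> b"
    using fixed \<open>t \<noteq> b\<close> inv by metis
  moreover have "odd (K b + j * (delta \<alpha> b + delta (\<tau> \<alpha>) b)) = odd (K b)" for K j \<alpha>
  proof -
    have "delta (\<tau> \<alpha>) b = delta \<alpha> b"
      unfolding delta_def using inv fixed by metis
    then have eq: "K b + j * (delta \<alpha> b + delta (\<tau> \<alpha>) b) = K b + 2 * (j * delta \<alpha> b)"
      by (simp add: algebra_simps)
    show ?thesis
      unfolding eq by simp
  qed
  ultimately show ?thesis
    unfolding admissible_def using \<open>t \<noteq> b\<close> by auto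
qed

lemma letter_count_w_ab:
  "letter_count Q (w_ab c d) s = (if c = s \<and> Q (delta d) (delta d) then 1 else 0)
     + (if d = s \<and> Q (\<lambda>y. - delta c y) (\<lambda>_. 0) then 1 else 0)"
proof -
  let ?p = "\<lambda>x::nat. if x = 0 then c else d"
  have link: "linking [0, 1, 0, 1] 0 1 = 1" "linking [0, 1, 0, 1] 1 0 = -1"
    by (simp_all add: linking_def interlace_sign_def)
  have set_w: "set [0::nat, 1, 0, 1] = {0, 1}" by auto
  have "link_sum h [0, 1, 0, 1] ?p 0 = (\<lambda>y. if d = y then h 1 else 0)"
       "link_sum h [0, 1, 0, 1] ?p 1 = (\<lambda>y. if c = y then h (-1) else 0)" if "h 0 = 0" for h
    unfolding link_sum_def set_w using link that by (auto intro!: ext)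
  then have "link_sum id [0, 1, 0, 1] ?p 0 = delta d"
    "link_sum indicator_one [0, 1, 0, 1] ?p 0 = delta d"
    "link_sum id [0, 1, 0, 1] ?p 1 = (\<lambda>y. - delta c y)"
    "link_sum indicator_one [0, 1, 0, 1] ?p 1 = (\<lambda>_. 0)"
    by (auto simp: indicator_one_def delta_def intro!: ext)
  then show ?thesis
    unfolding letter_count_def w_ab_def fst_conv snd_conv set_w by simp
qed

lemma letter_count_nonzero_if_homotopic:
  assumes inv: "\<And>x. \<tau> (\<tau> x) = x" and adm: "admissible \<tau> t Q" and h: "homotopic \<tau> u v"
    and count_t: "letter_count Q v t = 1"
    and count_\<tau>t: "\<tau> t \<noteq> t \<Longrightarrow> letter_count Q v (\<tau> t) = 0"
  shows "letter_count Q u t \<noteq> 0"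
proof -
  have eq: "letter_invariant \<tau> Q t u = letter_invariant \<tau> Q t v"
    using letter_invariant_homotopic[OF inv adm h] .
  show ?thesis
  proof (cases "\<tau> t = t")
    case True
    then show ?thesis
      using eq count_t unfolding letter_invariant_def by auto
  next
    case False
    then show ?thesis
      using eq count_t count_\<tau>t letter_count_nonneg[of Q u "\<tau> t"]
      unfolding letter_invariant_def by auto
  qed
qed

lemma homotopic_refl: "homotopic \<tau> u u"
  unfolding homotopic_def by simp

lemma homotopic_sym: "homotopic \<tau> u v \<Longrightarrow> homotopic \<tau> v u"
  unfolding homotopic_def by (rule symp_rtranclp[unfolded symp_def, rule_format]) (auto simp: symp_def)

lemma homotopic_trans [trans]: "homotopic \<tau> u v \<Longrightarrow> homotopic \<tau> v w \<Longrightarrow> homotopic \<tau> u w"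
  unfolding homotopic_def by (rule rtranclp_trans)

lemma homotopic_if_step: "nw_step \<tau> u v \<Longrightarrow> homotopic \<tau> u v"
  unfolding homotopic_def by (rule r_into_rtranclp) simp

lemma homotopic_relabel:
  assumes "is_nanoword (w, p)" and "\<forall>x\<in>set w. q x = p x"
  shows "homotopic \<tau> (w, p) (w, q)"
proof (rule homotopic_if_step)
  have "nw_iso (w, p) (w, q)"
    unfolding nw_iso_def using assms(2) by (intro exI[of _ id]) simp
  then show "nw_step \<tau> (w, p) (w, q)"
    using assms(1) unfolding nw_step_def is_nanoword_def by simp
qed

lemma homotopic_move1:
  assumes "is_nanoword (x @ [A, A] @ y, p)" "is_nanoword (x @ y, p)"
  shows "homotopic \<tau> (x @ [A, A] @ y, p) (x @ y, p)"
  using assms by (intro homotopic_if_step) (auto simp: nw_step_def move1_def)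

lemma homotopic_move2:
  assumes "A \<noteq> B" "p B = \<tau> (p A)"
    and "is_nanoword (x @ [A, B] @ y @ [B, A] @ z, p)" "is_nanoword (x @ y @ z, p)"
  shows "homotopic \<tau> (x @ [A, B] @ y @ [B, A] @ z, p) (x @ y @ z, p)"
proof (rule homotopic_if_step)
  have "move2 \<tau> (x @ [A, B] @ y @ [B, A] @ z, p) (x @ y @ z, p)"
    unfolding move2_def fst_conv snd_conv using assms(1,2) by blast
  then show "nw_step \<tau> (x @ [A, B] @ y @ [B, A] @ z, p) (x @ y @ z, p)"
    using assms(3,4) unfolding nw_step_def by blast
qed

lemma homotopic_move3:
  assumes "A \<noteq> B" "A \<noteq> C" "B \<noteq> C" "p A = p B" "p B = p C"
    and "is_nanoword (x @ [A, B] @ y @ [A, C] @ z @ [B, C] @ r, p)"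
    and "is_nanoword (x @ [B, A] @ y @ [C, A] @ z @ [C, B] @ r, p)"
  shows "homotopic \<tau> (x @ [A, B] @ y @ [A, C] @ z @ [B, C] @ r, p)
                     (x @ [B, A] @ y @ [C, A] @ z @ [C, B] @ r, p)"
proof (rule homotopic_if_step)
  have "move3 (x @ [A, B] @ y @ [A, C] @ z @ [B, C] @ r, p) (x @ [B, A] @ y @ [C, A] @ z @ [C, B] @ r, p)"
    unfolding move3_def fst_conv snd_conv using assms(1-5) by blast
  then show "nw_step \<tau> (x @ [A, B] @ y @ [A, C] @ z @ [B, C] @ r, p)
                       (x @ [B, A] @ y @ [C, A] @ z @ [C, B] @ r, p)"
    using assms(6,7) unfolding nw_step_def by blast
qed

lemma w_ab_tau_homotopic_empty:
  assumes inv: "\<And>x. \<tau> (\<tau> x) = x"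
  shows "homotopic \<tau> (w_ab c (\<tau> c)) ([], q)"
proof -
  define p where "p = (\<lambda>x::nat. if even x then c else \<tau> c)"
  have "homotopic \<tau> (w_ab c (\<tau> c)) ([0, 1, 0, 1], p)"
    unfolding w_ab_def by (rule homotopic_relabel) (simp_all add: is_nanoword_def p_def)
  also have "homotopic \<tau> \<dots> ([2, 3, 0, 1, 3, 2, 0, 1], p)"
    using homotopic_sym[OF homotopic_move2[of 2 3 p \<tau> "[]" "[0, 1]" "[0, 1]"]]
    by (simp add: p_def is_nanoword_def)
  also have "homotopic \<tau> \<dots> ([2, 4, 5, 3, 0, 1, 3, 2, 0, 1, 5, 4], p)"
    using homotopic_sym[OF homotopic_move2[of 4 5 p \<tau> "[2]" "[3, 0, 1, 3, 2, 0, 1]" "[]"]]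
    by (simp add: p_def is_nanoword_def)
  also have "homotopic \<tau> \<dots> ([2, 4, 3, 5, 0, 3, 1, 2, 0, 5, 1, 4], p)"
    using homotopic_sym[OF homotopic_move3[of 3 5 1 p "[2, 4]" "[0]" "[2, 0]" "[4]" \<tau>]]
    by (simp add: p_def is_nanoword_def)
  also have "homotopic \<tau> \<dots> ([2, 4, 3, 3, 1, 2, 1, 4], p)"
    using homotopic_move2[of 5 0 p \<tau> "[2, 4, 3]" "[3, 1, 2]" "[1, 4]"]
    by (simp add: p_def is_nanoword_def inv)
  also have "homotopic \<tau> \<dots> ([2, 4, 1, 2, 1, 4], p)"
    using homotopic_move1[of "[2, 4]" 3 "[1, 2, 1, 4]" p \<tau>]
    by (simp add: is_nanoword_def)
  also have "homotopic \<tau> \<dots> ([2, 2], p)"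
    using homotopic_move2[of 4 1 p \<tau> "[2]" "[2]" "[]"]
    by (simp add: p_def is_nanoword_def)
  also have "homotopic \<tau> \<dots> ([], p)"
    using homotopic_move1[of "[]" 2 "[]" p \<tau>]
    by (simp add: is_nanoword_def)
  also have "homotopic \<tau> \<dots> ([], q)"
    by (rule homotopic_relabel) (simp_all add: is_nanoword_def)
  finally show ?thesis .
qed

lemma w_ab_homotopic_imp_eq:
  assumes inv: "\<And>x. \<tau> (\<tau> x) = x" and ab: "a \<noteq> \<tau> b"
    and h: "homotopic \<tau> (w_ab c d) (w_ab a b)"
  shows "c = a \<and> d = b"
proof -
  have ba: "b \<noteq> \<tau> a"
    using ab inv by metis
  have count_congruent: "letter_count (\<lambda>L K. tau_congruent \<tau> L (delta m)) (w_ab q0 q1) s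
      = (if q0 = s \<and> q1 = m then 1 else 0) + (if q1 = s \<and> m = \<tau> q0 then 1 else 0)" for m q0 q1 s
    unfolding letter_count_w_ab by (simp add: tau_congruent_delta_iff tau_congruent_neg_delta_iff[OF inv])
  have nonzero: "letter_count (\<lambda>L K. tau_congruent \<tau> L (delta m)) (w_ab c d) t \<noteq> 0"
    if "letter_count (\<lambda>L K. tau_congruent \<tau> L (delta m)) (w_ab a b) t = 1"
       "\<tau> t \<noteq> t \<Longrightarrow> letter_count (\<lambda>L K. tau_congruent \<tau> L (delta m)) (w_ab a b) (\<tau> t) = 0" for m t
    using letter_count_nonzero_if_homotopic[OF inv admissible_tau_congruent[OF inv] h] that .
  have "(c = a \<and> d = b) \<or> (d = a \<and> c = \<tau> b)"
    using nonzero[of b a] ab ba inv unfolding count_congruent by (auto split: if_splits)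
  moreover have "\<tau> a = a \<and> \<tau> b = b" if "d = a" "c = \<tau> b"
    using nonzero[of "\<tau> a" b] that ab ba inv unfolding count_congruent by (auto split: if_splits)
  moreover have "a = b" if "d = a" "c = b" "\<tau> a = a" "\<tau> b = b"
  proof (rule ccontr)
    assume "a \<noteq> b"
    have count_odd: "letter_count (\<lambda>L K. odd (K b)) (w_ab q0 q1) s = (if q0 = s \<and> q1 = b then 1 else 0)"
      for q0 q1 s
      unfolding letter_count_w_ab by (simp add: delta_def)
    show False
      using letter_count_nonzero_if_homotopic[OF inv admissible_odd_at_fixed_point[OF inv \<open>\<tau> b = b\<close> \<open>a \<noteq> b\<close>] h]
        that \<open>a \<noteq> b\<close> unfolding count_odd by simp
  qed
  ultimately show ?thesis by auto
qed

lemma push_nw_w_ab: "push_nw f (w_ab a b) = w_ab (f a) (f b)"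
  unfolding push_nw_def w_ab_def by auto

theorem corollary8p5:
  fixes \<tau> :: "'a \<Rightarrow> 'a" and a b :: 'a
  assumes "\<tau> \<circ> \<tau> = id"
  shows "(a = \<tau> b \<longrightarrow> homotopy_automorphisms \<tau> (w_ab a b) = {f. tau_equivariant_bij \<tau> f})
       \<and> (a \<noteq> \<tau> b \<longrightarrow> homotopy_automorphisms \<tau> (w_ab a b) =
            {f. tau_equivariant_bij \<tau> f \<and> f a = a \<and> f b = b})"
proof -
  have inv: "\<And>x. \<tau> (\<tau> x) = x"
    using assms by (metis comp_apply id_apply)
  have aut: "homotopy_automorphisms \<tau> (w_ab a b)
      = {f. tau_equivariant_bij \<tau> f \<and> homotopic \<tau> (w_ab (f a) (f b)) (w_ab a b)}"
    unfolding homotopy_automorphisms_def push_nw_w_ab ..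
  have "homotopic \<tau> (w_ab (f a) (f b)) (w_ab a b)" if "a = \<tau> b" "tau_equivariant_bij \<tau> f" for f
  proof -
    have "b = \<tau> a" "f b = \<tau> (f a)"
      using that inv unfolding tau_equivariant_bij_def by (metis comp_apply)+
    then show ?thesis
      using w_ab_tau_homotopic_empty[OF inv] homotopic_sym homotopic_trans by metis
  qed
  moreover have "homotopic \<tau> (w_ab (f a) (f b)) (w_ab a b) \<longleftrightarrow> f a = a \<and> f b = b"
    if "a \<noteq> \<tau> b" for f
    using w_ab_homotopic_imp_eq[OF inv that] homotopic_refl by metis
  ultimately show ?thesis
    unfolding aut by auto
qed

end
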